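(* Let $\mu$ be a probability measure on $\mathbb{C}$ with compact support, and let $X_1, X_2, \ldots$ be iid random variables with distribution $\mu$. Fix $\varepsilon > 0$. Then, almost surely, for all sufficiently large $n$, the polynomial $p_n(z) := \prod_{j=1}^n (z - X_j)$ has no critical points outside $N_\mu(\varepsilon)$.
   Context: For a probability measure $\mu$ on $\mathbb{C}$, $m_\mu(z) := \int_{\mathbb{C}} \frac{d\mu(x)}{z-x}$ for $z \notin \operatorname{supp}(\mu)$; $M_\mu := \{ z \in \mathbb{C}\setminus \operatorname{supp}(\mu) : m_\mu(z) = 0\}$; and $N_\mu(\varepsilon) := \{ z \in \mathbb{C} : \operatorname{dist}(z, \operatorname{supp}(\mu) \cup M_\mu) < \varepsilon\}$. A critical point of a polynomial is a zero of its derivative. *)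

theory Defs
  imports "HOL-Probability.Probability" "HOL-Computational_Algebra.Polynomial"
begin

definition msupp :: "complex measure \<Rightarrow> complex set" where
  "msupp \<mu> = {x. \<forall>e>0. emeasure \<mu> (ball x e) > 0}"

definition cauchy_transform :: "complex measure \<Rightarrow> complex \<Rightarrow> complex" where
  "cauchy_transform \<mu> z = (LINT x|\<mu>. 1 / (z - x))"

definition cauchy_zeros :: "complex measure \<Rightarrow> complex set" where
  "cauchy_zeros \<mu> = {z. z \<notin> msupp \<mu> \<and> cauchy_transform \<mu> z = 0}"

definition nbhd_N :: "complex measure \<Rightarrow> real \<Rightarrow> complex set" where
  "nbhd_N \<mu> \<epsilon> = {z. infdist z (msupp \<mu> \<union> cauchy_zeros \<mu>) < \<epsilon>}"

definition emp_poly :: "(nat \<Rightarrow> complex) \<Rightarrow> nat \<Rightarrow> complex poly" where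
  "emp_poly x n = (\<Prod>j\<in>{1..n}. [:- x j, 1:])"

definition critical_points :: "complex poly \<Rightarrow> complex set" where
  "critical_points p = {z. poly (pderiv p) z = 0}"

end

theory Submission
  imports Defs
begin

text \<open>
  Away from \<open>supp \<mu>\<close> the polynomial \<open>p\<^sub>n\<close> has no roots, so there \<open>z\<close> is a critical point
  exactly when \<open>\<Sum>\<^sub>j 1 / (z - X\<^sub>j) = 0\<close>. Outside a disc containing \<open>supp \<mu>\<close> this is impossible,
  because every \<open>z / (z - X\<^sub>j)\<close> has positive real part. On the remaining compact set \<open>K\<close> of
  points at distance at least \<open>\<epsilon>\<close> from \<open>supp \<mu> \<union> M\<^sub>\<mu>\<close> the Cauchy transform \<open>m\<^sub>\<mu>\<close> is Lipschitz
  and zero-free, hence \<open>|m\<^sub>\<mu>| \<ge> \<delta> > 0\<close> on \<open>K\<close>. The kernels \<open>1 / (z - x)\<close>, \<open>z \<in> K\<close>,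
  \<open>x \<in> supp \<mu>\<close>, are bounded and equi-Lipschitz in \<open>z\<close>, so Hoeffding's inequality and
  Borel--Cantelli on a finite net of \<open>K\<close> show that almost surely, for all large \<open>n\<close>,
  \<open>|(1/n) \<Sum>\<^sub>j 1 / (z - X\<^sub>j) - m\<^sub>\<mu>(z)| < \<delta>\<close> uniformly on \<open>K\<close>; thus the sum has no zero
  in \<open>K\<close> either.
\<close>

section \<open>Laws of large numbers for bounded variables\<close>

lemma AE_eventually_ball_finite:
  assumes "finite A" and "\<And>a. a \<in> A \<Longrightarrow> AE x in M. eventually (P a x) F"
  shows "AE x in M. eventually (\<lambda>n. \<forall>a\<in>A. P a x n) F"
proof -
  have "AE x in M. \<forall>a\<in>A. eventually (P a x) F"
    using assms by (simp add: AE_finite_all)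
  then show ?thesis
    by eventually_elim (rule eventually_ball_finite[OF \<open>finite A\<close>])
qed

context prob_space
begin

lemma Hoeffding_sum_deviation_le_geometric:
  fixes Y :: "nat \<Rightarrow> 'a \<Rightarrow> real"
  assumes "indep_vars (\<lambda>_. borel) Y UNIV"
    and "\<And>i. AE x in M. Y i x \<in> {a..b}"
    and "a < b"
    and "\<And>i. expectation (Y i) = c"
    and "t > 0"
  shows "\<P>(x in M. real n * t \<le> \<bar>(\<Sum>i\<in>{1..n}. Y i x) - real n * c\<bar>)
           \<le> 2 * exp (-2 * t\<^sup>2 / (b - a)\<^sup>2) ^ n"
proof (cases "n = 0")
  case True
  then show ?thesis
    by (simp add: prob_space)
next
  case False
  interpret Hoeffding_ineq M "{1..n}" Y "\<lambda>_. a" "\<lambda>_. b" "real n * c"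
  proof unfold_locales
    show "indep_vars (\<lambda>_. borel) Y {1..n}"
      by (rule indep_vars_subset[OF assms(1)]) auto
  qed (use assms in auto)
  have "\<P>(x in M. real n * t \<le> \<bar>(\<Sum>i\<in>{1..n}. Y i x) - real n * c\<bar>)
      \<le> 2 * exp (-2 * (real n * t)\<^sup>2 / (\<Sum>i\<in>{1..n}. (b - a)\<^sup>2))"
    using Hoeffding_ineq_abs_ge[of "real n * t"] False \<open>a < b\<close> \<open>t > 0\<close> by simp
  also have "-2 * (real n * t)\<^sup>2 / (\<Sum>i\<in>{1..n}. (b - a)\<^sup>2) = real n * (-2 * t\<^sup>2 / (b - a)\<^sup>2)"
    using False by (simp add: field_simps power2_eq_square[of "real n"] power_mult_distrib)
  finally show ?thesis
    by (simp add: exp_of_nat_mult[symmetric])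
qed

text \<open>Hoeffding's bound decays geometrically in \<open>n\<close>, so Borel--Cantelli applies.\<close>
lemma AE_eventually_sum_deviation_less:
  fixes Y :: "nat \<Rightarrow> 'a \<Rightarrow> real"
  assumes "indep_vars (\<lambda>_. borel) Y UNIV"
    and "\<And>i. AE x in M. Y i x \<in> {a..b}"
    and "a < b"
    and "\<And>i. expectation (Y i) = c"
    and "t > 0"
  shows "AE x in M. eventually (\<lambda>n. \<bar>(\<Sum>i\<in>{1..n}. Y i x) - real n * c\<bar> < real n * t) sequentially"
proof -
  have [measurable]: "Y i \<in> borel_measurable M" for i
    using assms(1) unfolding indep_vars_def by blast
  define A where "A n = {x \<in> space M. real n * t \<le> \<bar>(\<Sum>i\<in>{1..n}. Y i x) - real n * c\<bar>}" for n
  have [measurable]: "A n \<in> sets M" for n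
    unfolding A_def by measurable
  define q where "q = exp (-2 * t\<^sup>2 / (b - a)\<^sup>2)"
  have "q < 1"
    using \<open>t > 0\<close> \<open>a < b\<close> by (simp add: q_def)
  then have "summable (\<lambda>n. 2 * q ^ n)"
    by (intro summable_mult summable_geometric) (simp add: q_def)
  moreover have "norm (prob (A n)) \<le> 2 * q ^ n" for n
    unfolding A_def q_def using Hoeffding_sum_deviation_le_geometric[OF assms] by simp
  ultimately have "summable (\<lambda>n. prob (A n))"
    by (rule summable_comparison_test'[where N=0])
  then have "AE x in M. eventually (\<lambda>n. x \<in> space M - A n) sequentially"
    by (intro borel_cantelli_AE1) (auto simp: emeasure_eq_measure)
  then show ?thesis
    by (rule AE_mp) (auto intro!: AE_I2 elim!: eventually_mono simp: A_def)
qed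

lemma AE_eventually_sum_deviation_less_functional:
  fixes Y :: "nat \<Rightarrow> 'a \<Rightarrow> complex" and g :: "complex \<Rightarrow> real"
  assumes ind: "indep_vars (\<lambda>_. borel) Y UNIV"
    and bnd: "\<And>i. AE x in M. cmod (Y i x) \<le> B"
    and int: "\<And>i. integrable M (Y i)"
    and mean: "\<And>i. expectation (Y i) = c"
    and lin: "bounded_linear g" and le: "\<And>z. \<bar>g z\<bar> \<le> cmod z"
    and "t > 0"
  shows "AE x in M. eventually
           (\<lambda>n. \<bar>(\<Sum>i\<in>{1..n}. g (Y i x)) - real n * g c\<bar> < real n * t) sequentially"
proof (rule AE_eventually_sum_deviation_less)
  show "indep_vars (\<lambda>_. borel) (\<lambda>i x. g (Y i x)) UNIV"
    using lin by (intro indep_vars_compose2[OF ind])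
      (simp add: borel_measurable_continuous_onI linear_continuous_on)
  show "AE x in M. g (Y i x) \<in> {-\<bar>B\<bar> - 1..\<bar>B\<bar> + 1}" for i
    using bnd[of i]
  proof eventually_elim
    case (elim x)
    then have "\<bar>g (Y i x)\<bar> \<le> \<bar>B\<bar>"
      using le[of "Y i x"] by linarith
    then show ?case
      by (auto simp: abs_le_iff)
  qed
  show "expectation (\<lambda>x. g (Y i x)) = g c" for i
    using integral_bounded_linear[OF lin int[of i]] mean[of i] by simp
qed (use \<open>t > 0\<close> in auto)

lemma AE_eventually_sum_deviation_less_complex:
  fixes Y :: "nat \<Rightarrow> 'a \<Rightarrow> complex"
  assumes "indep_vars (\<lambda>_. borel) Y UNIV"
    and "\<And>i. AE x in M. cmod (Y i x) \<le> B"
    and "\<And>i. integrable M (Y i)"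
    and "\<And>i. expectation (Y i) = c"
    and "t > 0"
  shows "AE x in M. eventually
           (\<lambda>n. cmod ((\<Sum>i\<in>{1..n}. Y i x) - of_nat n * c) < real n * t) sequentially"
proof -
  have "AE x in M. eventually (\<lambda>n. \<forall>g\<in>{Re, Im}.
      \<bar>(\<Sum>i\<in>{1..n}. g (Y i x)) - real n * g c\<bar> < real n * (t / 2)) sequentially"
    using AE_eventually_sum_deviation_less_functional[OF assms(1-4) bounded_linear_Re abs_Re_le_cmod
        half_gt_zero[OF \<open>t > 0\<close>]]
      AE_eventually_sum_deviation_less_functional[OF assms(1-4) bounded_linear_Im abs_Im_le_cmod
        half_gt_zero[OF \<open>t > 0\<close>]]
    by (intro AE_eventually_ball_finite) auto
  then show ?thesis
  proof (rule AE_mp, intro AE_I2 impI, elim eventually_mono)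
    fix x n
    let ?d = "(\<Sum>i\<in>{1..n}. Y i x) - of_nat n * c"
    assume "\<forall>g\<in>{Re, Im}. \<bar>(\<Sum>i\<in>{1..n}. g (Y i x)) - real n * g c\<bar> < real n * (t / 2)"
    then have "\<bar>Re ?d\<bar> + \<bar>Im ?d\<bar> < real n * t"
      by (simp add: Re_sum Im_sum)
    then show "cmod ?d < real n * t"
      using cmod_le[of ?d] by linarith
  qed
qed

lemma lipschitz_on_integral_parametric:
  fixes f :: "'c::metric_space \<Rightarrow> 'a \<Rightarrow> 'b::{banach, second_countable_topology}"
  assumes S: "AE x in M. x \<in> S"
    and meas: "\<And>z. f z \<in> borel_measurable M"
    and bnd: "\<And>z x. z \<in> K \<Longrightarrow> x \<in> S \<Longrightarrow> norm (f z x) \<le> B"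
    and lip: "\<And>z w x. z \<in> K \<Longrightarrow> w \<in> K \<Longrightarrow> x \<in> S \<Longrightarrow> norm (f z x - f w x) \<le> L * dist z w"
    and "L \<ge> 0"
  shows "L-lipschitz_on K (\<lambda>z. \<integral>x. f z x \<partial>M)"
proof (rule lipschitz_onI)
  fix z w assume "z \<in> K" "w \<in> K"
  have int: "integrable M (f v)" if "v \<in> K" for v
  proof (rule integrable_const_bound[OF _ meas])
    show "AE x in M. norm (f v x) \<le> B"
      using S by eventually_elim (use bnd that in auto)
  qed
  have "dist (\<integral>x. f z x \<partial>M) (\<integral>x. f w x \<partial>M) = norm (\<integral>x. f z x - f w x \<partial>M)"
    using int[OF \<open>z \<in> K\<close>] int[OF \<open>w \<in> K\<close>] by (simp add: dist_norm)
  also have "\<dots> \<le> (\<integral>x. norm (f z x - f w x) \<partial>M)"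
    by (rule integral_norm_bound)
  also have "\<dots> \<le> L * dist z w"
  proof (rule integral_le_const)
    show "integrable M (\<lambda>x. norm (f z x - f w x))"
      using int[OF \<open>z \<in> K\<close>] int[OF \<open>w \<in> K\<close>] by auto
    show "AE x in M. norm (f z x - f w x) \<le> L * dist z w"
      using S by eventually_elim (use lip \<open>z \<in> K\<close> \<open>w \<in> K\<close> in auto)
  qed
  finally show "dist (\<integral>x. f z x \<partial>M) (\<integral>x. f w x \<partial>M) \<le> L * dist z w" .
qed (rule \<open>L \<ge> 0\<close>)

lemma AE_all_in_if_distr:
  fixes X :: "nat \<Rightarrow> 'a \<Rightarrow> 'b::topological_space"
  assumes "\<And>j. X j \<in> borel_measurable M" and "\<And>j. distr M borel (X j) = \<nu>"
    and "AE x in \<nu>. x \<in> S"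
  shows "AE \<omega> in M. \<forall>j. X j \<omega> \<in> S"
  unfolding AE_all_countable
proof
  fix j
  have "AE x in distr M borel (X j). x \<in> S"
    unfolding assms(2) by (rule assms(3))
  then show "AE \<omega> in M. X j \<omega> \<in> S"
    by (rule AE_distrD[OF assms(1)])
qed

lemma AE_eventually_sum_deviation_less_distr:
  fixes X :: "nat \<Rightarrow> 'a \<Rightarrow> 'b::topological_space" and g :: "'b \<Rightarrow> complex"
  assumes ind: "indep_vars (\<lambda>_. borel) X UNIV"
    and distr: "\<And>j. distr M borel (X j) = \<nu>"
    and bnd: "AE x in \<nu>. cmod (g x) \<le> B"
    and g: "g \<in> borel_measurable borel"
    and "t > 0"
  shows "AE \<omega> in M. eventually (\<lambda>n.
           cmod ((\<Sum>j\<in>{1..n}. g (X j \<omega>)) - of_nat n * (\<integral>x. g x \<partial>\<nu>)) < real n * t) sequentially"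
proof (rule AE_eventually_sum_deviation_less_complex)
  have X_meas[measurable]: "X j \<in> borel_measurable M" for j
    using ind unfolding indep_vars_def by blast
  show "indep_vars (\<lambda>_. borel) (\<lambda>j \<omega>. g (X j \<omega>)) UNIV"
    by (rule indep_vars_compose2[OF ind]) (simp add: g)
  show bnd_X: "AE \<omega> in M. cmod (g (X j \<omega>)) \<le> B" for j
    using bnd unfolding distr[of j, symmetric] by (rule AE_distrD[rotated]) simp
  show "integrable M (\<lambda>\<omega>. g (X j \<omega>))" for j
    using bnd_X[of j] g by (intro integrable_const_bound[where B = B]) auto
  show "expectation (\<lambda>\<omega>. g (X j \<omega>)) = (\<integral>x. g x \<partial>\<nu>)" for j
    using integral_distr[OF X_meas[of j] g] distr[of j] by simp
qed (rule \<open>t > 0\<close>)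

end

lemma norm_sum_deviation_less_if_near:
  fixes f :: "'c::metric_space \<Rightarrow> 'b \<Rightarrow> complex" and m :: "'c \<Rightarrow> complex"
  assumes lip: "\<And>j. j \<in> {1..n} \<Longrightarrow> cmod (f z (x j) - f w (x j)) \<le> L * dist z w"
    and lip_m: "cmod (m z - m w) \<le> L * dist z w"
    and near: "L * dist z w \<le> t / 3"
    and dev: "cmod ((\<Sum>j\<in>{1..n}. f w (x j)) - of_nat n * m w) < real n * (t / 3)"
  shows "cmod ((\<Sum>j\<in>{1..n}. f z (x j)) - of_nat n * m z) < real n * t"
proof -
  let ?Sz = "\<Sum>j\<in>{1..n}. f z (x j)" and ?Sw = "\<Sum>j\<in>{1..n}. f w (x j)"
  have "cmod (?Sz - ?Sw) \<le> (\<Sum>j\<in>{1..n}. cmod (f z (x j) - f w (x j)))"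
    unfolding sum_subtractf[symmetric] by (rule norm_sum)
  also have "\<dots> \<le> (\<Sum>j\<in>{1..n}. t / 3)"
    by (intro sum_mono order_trans[OF lip near])
  finally have close_sum: "cmod (?Sz - ?Sw) \<le> real n * (t / 3)"
    by simp
  have "cmod (of_nat n * m w - of_nat n * m z) = real n * cmod (m z - m w)"
    by (simp add: right_diff_distrib[symmetric] norm_mult norm_minus_commute)
  also have "\<dots> \<le> real n * (t / 3)"
    using lip_m near by (intro mult_left_mono) auto
  finally have close_mean: "cmod (of_nat n * m w - of_nat n * m z) \<le> real n * (t / 3)" .
  have "cmod (?Sz - of_nat n * m z)
      \<le> cmod (?Sz - ?Sw) + cmod (?Sw - of_nat n * m w) + cmod (of_nat n * m w - of_nat n * m z)"
    by (rule norm_diff_triangle_le[OF norm_diff_triangle_le[OF order_refl order_refl] order_refl])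
  then show ?thesis
    using close_sum dev close_mean by linarith
qed

lemma norm_sum_deviation_less_on_net:
  fixes f :: "'c::metric_space \<Rightarrow> 'b \<Rightarrow> complex" and m :: "'c \<Rightarrow> complex"
  assumes F: "F \<subseteq> K" "K \<subseteq> (\<Union>w\<in>F. ball w (t / (3 * L)))" and "L > 0"
    and x: "\<And>j. j \<in> {1..n} \<Longrightarrow> x j \<in> S"
    and lip: "\<And>z w y. z \<in> K \<Longrightarrow> w \<in> K \<Longrightarrow> y \<in> S \<Longrightarrow> cmod (f z y - f w y) \<le> L * dist z w"
    and lip_m: "L-lipschitz_on K m"
    and dev: "\<And>w. w \<in> F \<Longrightarrow> cmod ((\<Sum>j\<in>{1..n}. f w (x j)) - of_nat n * m w) < real n * (t / 3)"
    and "z \<in> K"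
  shows "cmod ((\<Sum>j\<in>{1..n}. f z (x j)) - of_nat n * m z) < real n * t"
proof -
  obtain w where "w \<in> F" "dist w z < t / (3 * L)"
    using F(2) \<open>z \<in> K\<close> by auto
  then have "w \<in> K" and near: "L * dist z w \<le> t / 3"
    using F(1) \<open>L > 0\<close> by (auto simp: field_simps dist_commute)
  have "cmod (f z (x j) - f w (x j)) \<le> L * dist z w" if "j \<in> {1..n}" for j
    using lip[OF \<open>z \<in> K\<close> \<open>w \<in> K\<close> x[OF that]] .
  moreover have "cmod (m z - m w) \<le> L * dist z w"
    using lipschitz_onD[OF lip_m \<open>z \<in> K\<close> \<open>w \<in> K\<close>] by (simp add: dist_norm)
  moreover note near dev[OF \<open>w \<in> F\<close>]
  ultimately show ?thesis
    by (rule norm_sum_deviation_less_if_near)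
qed

context prob_space
begin

text \<open>By equi-Lipschitz continuity it suffices to control the finitely many parameters of a
  \<open>t / (3 L)\<close>-net of \<open>K\<close>.\<close>
lemma AE_eventually_uniform_sum_deviation_less:
  fixes X :: "nat \<Rightarrow> 'a \<Rightarrow> 'b::topological_space" and f :: "'c::metric_space \<Rightarrow> 'b \<Rightarrow> complex"
  assumes ind: "indep_vars (\<lambda>_. borel) X UNIV"
    and distr: "\<And>j. distr M borel (X j) = \<nu>"
    and S: "AE x in \<nu>. x \<in> S"
    and "compact K"
    and f_meas: "\<And>z. f z \<in> borel_measurable borel"
    and bnd: "\<And>z x. z \<in> K \<Longrightarrow> x \<in> S \<Longrightarrow> cmod (f z x) \<le> B"
    and lip: "\<And>z w x. z \<in> K \<Longrightarrow> w \<in> K \<Longrightarrow> x \<in> S \<Longrightarrow> cmod (f z x - f w x) \<le> L * dist z w"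
    and "L > 0" and "t > 0"
  shows "AE \<omega> in M. eventually (\<lambda>n. \<forall>z\<in>K.
           cmod ((\<Sum>j\<in>{1..n}. f z (X j \<omega>)) - of_nat n * (\<integral>x. f z x \<partial>\<nu>)) < real n * t) sequentially"
proof -
  have X_meas: "X j \<in> borel_measurable M" for j
    using ind unfolding indep_vars_def by blast
  have \<nu>: "prob_space \<nu>"
    using prob_space_distr[OF X_meas[of 0]] distr[of 0] by simp
  have sets_\<nu>: "sets \<nu> = sets borel"
    using distr[of 0] by auto
  define m where "m z = (\<integral>x. f z x \<partial>\<nu>)" for z
  have lip_m: "L-lipschitz_on K m"
    unfolding m_def using \<open>L > 0\<close> f_meas
    by (intro prob_space.lipschitz_on_integral_parametric[OF \<nu> S _ bnd lip])
      (auto simp: measurable_cong_sets[OF sets_\<nu> refl])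
  have dev: "AE \<omega> in M. eventually (\<lambda>n.
      cmod ((\<Sum>j\<in>{1..n}. f w (X j \<omega>)) - of_nat n * m w) < real n * (t / 3)) sequentially"
    if "w \<in> K" for w
    unfolding m_def
  proof (rule AE_eventually_sum_deviation_less_distr[OF ind distr _ f_meas])
    show "AE x in \<nu>. cmod (f w x) \<le> B"
      using S by eventually_elim (use bnd that in auto)
  qed (use \<open>t > 0\<close> in simp)
  have "t / (3 * L) > 0"
    using \<open>t > 0\<close> \<open>L > 0\<close> by simp
  obtain F where F: "F \<subseteq> K" "finite F" "K \<subseteq> (\<Union>w\<in>F. ball w (t / (3 * L)))"
    by (rule compactE_image[OF \<open>compact K\<close>, of K "\<lambda>w. ball w (t / (3 * L))"])
      (use \<open>t / (3 * L) > 0\<close> in auto)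
  have "AE \<omega> in M. (\<forall>j. X j \<omega> \<in> S) \<and> eventually (\<lambda>n. \<forall>w\<in>F.
      cmod ((\<Sum>j\<in>{1..n}. f w (X j \<omega>)) - of_nat n * m w) < real n * (t / 3)) sequentially"
    using dev F(1,2)
    by (intro eventually_conj AE_all_in_if_distr[OF X_meas distr S] AE_eventually_ball_finite) auto
  then show ?thesis
  proof eventually_elim
    case (elim \<omega>)
    then show ?case
    proof (elim conjE eventually_mono, intro ballI)
      fix n z
      assume "\<forall>j. X j \<omega> \<in> S" "z \<in> K"
        and "\<forall>w\<in>F. cmod ((\<Sum>j\<in>{1..n}. f w (X j \<omega>)) - of_nat n * m w) < real n * (t / 3)"
      then show "cmod ((\<Sum>j\<in>{1..n}. f z (X j \<omega>)) - of_nat n * (\<integral>x. f z x \<partial>\<nu>)) < real n * t"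
        unfolding m_def[symmetric]
        by (intro norm_sum_deviation_less_on_net[OF F(1,3) \<open>L > 0\<close> _ lip lip_m]) auto
    qed
  qed
qed

end

section \<open>Support and Cauchy transform\<close>

text \<open>The complement of the support is covered by null balls; Lindelof's theorem makes the
  cover countable.\<close>
lemma AE_in_msupp:
  fixes \<mu> :: "complex measure"
  assumes sets: "sets \<mu> = sets borel"
  shows "AE x in \<mu>. x \<in> msupp \<mu>"
proof -
  define \<B> where "\<B> = {ball x e | x e. e > 0 \<and> emeasure \<mu> (ball x e) = 0}"
  have "\<Union>\<B> = - msupp \<mu>"
  proof (intro equalityI subsetI)
    fix y assume "y \<in> \<Union>\<B>"
    then obtain x e where "emeasure \<mu> (ball x e) = 0" "y \<in> ball x e"
      unfolding \<B>_def by auto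
    define d where "d = e - dist x y"
    have "d > 0"
      using \<open>y \<in> ball x e\<close> by (simp add: d_def)
    have "ball y d \<subseteq> ball x e"
      unfolding d_def
      by (auto simp: ball_def) (metis dist_triangle add.commute less_diff_eq order.strict_trans1)
    then have "emeasure \<mu> (ball y d) \<le> emeasure \<mu> (ball x e)"
      using sets by (intro emeasure_mono) auto
    then show "y \<in> - msupp \<mu>"
      using \<open>emeasure \<mu> (ball x e) = 0\<close> \<open>d > 0\<close> unfolding msupp_def by (auto simp: not_less)
  next
    fix y assume "y \<in> - msupp \<mu>"
    then obtain e where "e > 0" "emeasure \<mu> (ball y e) = 0"
      unfolding msupp_def by (auto simp: not_gr_zero)
    then show "y \<in> \<Union>\<B>"
      unfolding \<B>_def using centre_in_ball by blast
  qed
  moreover obtain \<B>' where "\<B>' \<subseteq> \<B>" "countable \<B>'" "\<Union>\<B>' = \<Union>\<B>"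
    by (rule Lindelof[of \<B>]) (auto simp: \<B>_def)
  moreover have "B \<in> null_sets \<mu>" if "B \<in> \<B>" for B
    using that sets unfolding \<B>_def by auto
  then have "(\<Union>B\<in>\<B>'. B) \<in> null_sets \<mu>"
    using \<open>countable \<B>'\<close> \<open>\<B>' \<subseteq> \<B>\<close> by (intro null_sets_UN') auto
  ultimately show ?thesis
    by (intro AE_I'[of "- msupp \<mu>"]) auto
qed

lemma norm_inverse_diff_le:
  fixes a b :: complex
  assumes "e > 0" "e \<le> cmod a" "e \<le> cmod b"
  shows "cmod (1 / a - 1 / b) \<le> cmod (b - a) / e\<^sup>2"
proof -
  have "a \<noteq> 0" "b \<noteq> 0"
    using assms by auto
  then have "cmod (1 / a - 1 / b) = cmod (b - a) / (cmod a * cmod b)"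
    by (simp add: field_simps norm_mult norm_divide)
  also have "\<dots> \<le> cmod (b - a) / e\<^sup>2"
  proof (rule frac_le)
    show "e\<^sup>2 \<le> cmod a * cmod b"
      unfolding power2_eq_square using assms by (intro mult_mono) auto
  qed (use assms in auto)
  finally show ?thesis .
qed

lemma norm_cauchy_kernel_le:
  fixes z x :: complex
  assumes "\<epsilon> > 0" "\<epsilon> \<le> infdist z A" "x \<in> A"
  shows "cmod (1 / (z - x)) \<le> 1 / \<epsilon>"
proof -
  have "\<epsilon> \<le> cmod (z - x)"
    using infdist_le[OF \<open>x \<in> A\<close>, of z] assms(2) by (simp add: dist_norm)
  then show ?thesis
    using \<open>\<epsilon> > 0\<close> by (simp add: norm_divide frac_le)
qed

lemma norm_cauchy_kernel_diff_le:
  fixes z w x :: complex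
  assumes "\<epsilon> > 0" "\<epsilon> \<le> infdist z A" "\<epsilon> \<le> infdist w A" "x \<in> A"
  shows "cmod (1 / (z - x) - 1 / (w - x)) \<le> 1 / \<epsilon>\<^sup>2 * dist z w"
proof -
  have "\<epsilon> \<le> cmod (z - x)" "\<epsilon> \<le> cmod (w - x)"
    using infdist_le[OF \<open>x \<in> A\<close>, of z] infdist_le[OF \<open>x \<in> A\<close>, of w] assms(2,3)
    by (simp_all add: dist_norm)
  with \<open>\<epsilon> > 0\<close> have "cmod (1 / (z - x) - 1 / (w - x)) \<le> cmod ((w - x) - (z - x)) / \<epsilon>\<^sup>2"
    by (rule norm_inverse_diff_le)
  then show ?thesis
    by (simp add: dist_norm norm_minus_commute)
qed

lemma compact_norm_bounded_below:
  fixes g :: "'a::topological_space \<Rightarrow> 'b::real_normed_vector"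
  assumes "compact K" "continuous_on K g" "\<And>z. z \<in> K \<Longrightarrow> g z \<noteq> 0"
  shows "\<exists>\<delta>>0. \<forall>z\<in>K. \<delta> \<le> norm (g z)"
proof (cases "K = {}")
  case False
  obtain z0 where "z0 \<in> K" "\<And>z. z \<in> K \<Longrightarrow> norm (g z0) \<le> norm (g z)"
    using continuous_attains_inf[OF \<open>compact K\<close> False continuous_on_norm[OF assms(2)]] by blast
  then show ?thesis
    using assms(3)[OF \<open>z0 \<in> K\<close>] by (intro exI[of _ "norm (g z0)"]) auto
qed (auto intro: exI[of _ 1])

lemma cauchy_transform_bounded_below:
  fixes \<mu> :: "complex measure"
  assumes "prob_space \<mu>" and sets: "sets \<mu> = sets borel"
    and "compact K" and "\<epsilon> > 0"
    and K: "\<And>z. z \<in> K \<Longrightarrow> \<epsilon> \<le> infdist z (msupp \<mu> \<union> cauchy_zeros \<mu>)"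
  shows "\<exists>\<delta>>0. \<forall>z\<in>K. \<delta> \<le> cmod (cauchy_transform \<mu> z)"
proof (rule compact_norm_bounded_below)
  let ?T = "msupp \<mu> \<union> cauchy_zeros \<mu>"
  have "(1 / \<epsilon>\<^sup>2)-lipschitz_on K (\<lambda>z. \<integral>x. 1 / (z - x) \<partial>\<mu>)"
  proof (rule prob_space.lipschitz_on_integral_parametric[OF \<open>prob_space \<mu>\<close> AE_in_msupp[OF sets]])
    show "(\<lambda>x. 1 / (z - x)) \<in> borel_measurable \<mu>" for z
      by (simp add: measurable_cong_sets[OF sets refl])
    show "cmod (1 / (z - x)) \<le> 1 / \<epsilon>" if "z \<in> K" "x \<in> msupp \<mu>" for z x
      using norm_cauchy_kernel_le[OF \<open>\<epsilon> > 0\<close> K[OF that(1)]] that(2) by simp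
    show "cmod (1 / (z - x) - 1 / (w - x)) \<le> 1 / \<epsilon>\<^sup>2 * dist z w"
      if "z \<in> K" "w \<in> K" "x \<in> msupp \<mu>" for z w x
      using norm_cauchy_kernel_diff_le[OF \<open>\<epsilon> > 0\<close> K[OF that(1)] K[OF that(2)]] that(3) by simp
  qed (auto intro: divide_nonneg_nonneg)
  then show "continuous_on K (cauchy_transform \<mu>)"
    unfolding cauchy_transform_def by (rule lipschitz_on_continuous_on)
  show "cauchy_transform \<mu> z \<noteq> 0" if "z \<in> K" for z
  proof -
    have "z \<notin> ?T"
      using K[OF that] \<open>\<epsilon> > 0\<close> infdist_zero[of z ?T] by auto
    then show ?thesis
      unfolding cauchy_zeros_def by auto
  qed
qed (fact \<open>compact K\<close>)

lemma (in prob_space) AE_eventually_uniform_cauchy_sum_deviation_less: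
  fixes \<mu> :: "complex measure" and X :: "nat \<Rightarrow> 'a \<Rightarrow> complex"
  assumes "sets \<mu> = sets borel"
    and "indep_vars (\<lambda>_. borel) X UNIV" and "\<And>j. distr M borel (X j) = \<mu>"
    and "compact K" and "\<epsilon> > 0" and "t > 0"
    and K_far: "\<And>z. z \<in> K \<Longrightarrow> \<epsilon> \<le> infdist z (msupp \<mu> \<union> cauchy_zeros \<mu>)"
  shows "AE \<omega> in M. eventually (\<lambda>n. \<forall>z\<in>K.
           cmod ((\<Sum>j\<in>{1..n}. 1 / (z - X j \<omega>)) - of_nat n * cauchy_transform \<mu> z) < real n * t)
           sequentially"
  unfolding cauchy_transform_def
proof (rule AE_eventually_uniform_sum_deviation_less[OF assms(2,3) AE_in_msupp[OF assms(1)]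
      \<open>compact K\<close>])
  show "cmod (1 / (z - x)) \<le> 1 / \<epsilon>" if "z \<in> K" "x \<in> msupp \<mu>" for z x
    using norm_cauchy_kernel_le[OF \<open>\<epsilon> > 0\<close> K_far[OF that(1)]] that(2) by simp
  show "cmod (1 / (z - x) - 1 / (w - x)) \<le> 1 / \<epsilon>\<^sup>2 * dist z w"
    if "z \<in> K" "w \<in> K" "x \<in> msupp \<mu>" for z w x
    using norm_cauchy_kernel_diff_le[OF \<open>\<epsilon> > 0\<close> K_far[OF that(1)] K_far[OF that(2)]] that(3) by simp
qed (use \<open>\<epsilon> > 0\<close> \<open>t > 0\<close> in simp_all)

section \<open>Critical points of the empirical polynomial\<close>

lemma poly_emp_poly: "poly (emp_poly x n) z = (\<Prod>j\<in>{1..n}. z - x j)"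
  by (simp add: emp_poly_def poly_prod)

lemma emp_poly_Suc: "emp_poly x (Suc n) = emp_poly x n * [:- x (Suc n), 1:]"
  unfolding emp_poly_def by (simp add: prod.cl_ivl_Suc mult.commute)

lemma poly_pderiv_emp_poly:
  assumes "\<And>j. j \<in> {1..n} \<Longrightarrow> z \<noteq> x j"
  shows "poly (pderiv (emp_poly x n)) z = poly (emp_poly x n) z * (\<Sum>j\<in>{1..n}. 1 / (z - x j))"
  using assms
proof (induction n)
  case 0
  then show ?case
    by (simp add: emp_poly_def)
next
  case (Suc n)
  let ?P = "emp_poly x n" and ?S = "\<Sum>j\<in>{1..n}. 1 / (z - x j)" and ?a = "x (Suc n)"
  have IH: "poly (pderiv ?P) z = poly ?P z * ?S"
    using Suc by simp
  have "z - ?a \<noteq> 0"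
    using Suc.prems by simp
  have "pderiv [:- ?a, 1:] = 1"
    by (simp add: pderiv_pCons)
  then have "poly (pderiv (?P * [:- ?a, 1:])) z = poly ?P z + (z - ?a) * poly (pderiv ?P) z"
    unfolding pderiv_mult by (simp add: algebra_simps)
  also have "\<dots> = poly (?P * [:- ?a, 1:]) z * (?S + 1 / (z - ?a))"
    using IH \<open>z - ?a \<noteq> 0\<close> by (simp add: field_simps)
  finally show ?case
    by (simp add: emp_poly_Suc sum.cl_ivl_Suc)
qed

lemma Re_divide_diff_pos:
  fixes x z :: complex
  assumes "cmod x < cmod z"
  shows "0 < Re (z / (z - x))"
proof -
  have "Re z * Re x + Im z * Im x = Re (z * cnj x)"
    by simp
  also have "\<dots> \<le> cmod z * cmod x"
    using complex_Re_le_cmod[of "z * cnj x"] by (simp add: norm_mult)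
  also have "\<dots> < cmod z * cmod z"
    using assms by (intro mult_strict_left_mono) auto
  also have "\<dots> = Re z * Re z + Im z * Im z"
    using cmod_power2[of z] by (simp add: power2_eq_square)
  finally have "0 < Re z * Re (z - x) + Im z * Im (z - x)"
    by (simp add: algebra_simps)
  moreover have "z \<noteq> x"
    using assms by auto
  ultimately show ?thesis
    by (simp add: Re_divide')
qed

text \<open>Multiplied by \<open>z\<close>, every term of the sum has positive real part.\<close>
lemma sum_inverse_diff_nonzero:
  fixes x :: "'a \<Rightarrow> complex"
  assumes "finite J" "J \<noteq> {}" "\<And>j. j \<in> J \<Longrightarrow> cmod (x j) < cmod z"
  shows "(\<Sum>j\<in>J. 1 / (z - x j)) \<noteq> 0"
proof
  assume "(\<Sum>j\<in>J. 1 / (z - x j)) = 0"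
  then have "0 = Re (z * (\<Sum>j\<in>J. 1 / (z - x j)))"
    by simp
  also have "\<dots> = (\<Sum>j\<in>J. Re (z / (z - x j)))"
    by (simp add: sum_distrib_left Re_sum)
  also have "\<dots> > 0"
    using assms by (intro sum_pos Re_divide_diff_pos) auto
  finally show False
    by simp
qed

lemma nonzero_if_norm_deviation_less:
  fixes s c :: complex
  assumes "cmod (s - of_nat n * c) < real n * \<delta>" and "\<delta> \<le> cmod c"
  shows "s \<noteq> 0"
proof
  assume "s = 0"
  then have "real n * cmod c < real n * \<delta>"
    using assms(1) by (simp add: norm_mult)
  then show False
    using assms(2) by (simp add: mult_less_cancel_left)
qed

lemma critical_points_emp_poly_subset_nbhd_N:
  fixes \<mu> :: "complex measure"
  assumes x: "\<And>j. x j \<in> msupp \<mu>" and R: "\<And>y. y \<in> msupp \<mu> \<Longrightarrow> cmod y \<le> R"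
    and "n \<ge> 1" "\<epsilon> > 0"
    and K: "{z. \<epsilon> \<le> infdist z (msupp \<mu> \<union> cauchy_zeros \<mu>)} \<inter> cball 0 R \<subseteq> K"
    and dev: "\<And>z. z \<in> K \<Longrightarrow>
      cmod ((\<Sum>j\<in>{1..n}. 1 / (z - x j)) - of_nat n * cauchy_transform \<mu> z) < real n * \<delta>"
    and \<delta>: "\<And>z. z \<in> K \<Longrightarrow> \<delta> \<le> cmod (cauchy_transform \<mu> z)"
  shows "critical_points (emp_poly x n) \<subseteq> nbhd_N \<mu> \<epsilon>"
proof
  fix z assume "z \<in> critical_points (emp_poly x n)"
  show "z \<in> nbhd_N \<mu> \<epsilon>"
  proof (rule ccontr)
    assume "z \<notin> nbhd_N \<mu> \<epsilon>"
    then have far: "\<epsilon> \<le> infdist z (msupp \<mu> \<union> cauchy_zeros \<mu>)"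
      unfolding nbhd_N_def by simp
    have "z \<noteq> x j" for j
      using infdist_le[of "x j" "msupp \<mu> \<union> cauchy_zeros \<mu>" z] far x[of j] \<open>\<epsilon> > 0\<close> by auto
    then have sum_zero: "(\<Sum>j\<in>{1..n}. 1 / (z - x j)) = 0"
      using \<open>z \<in> critical_points (emp_poly x n)\<close> poly_pderiv_emp_poly[of n z x]
      by (simp add: critical_points_def poly_emp_poly)
    show False
    proof (cases "cmod z \<le> R")
      case True
      with far K have "z \<in> K"
        by auto
      then show False
        using nonzero_if_norm_deviation_less[OF dev \<delta>] sum_zero by blast
    next
      case False
      then have "cmod (x j) < cmod z" for j
        using R[OF x[of j]] by linarith
      then show False
        using sum_inverse_diff_nonzero[of "{1..n}" x z] sum_zero \<open>n \<ge> 1\<close> by auto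
    qed
  qed
qed

theorem mainTheorem3:
  fixes \<mu> :: "complex measure" and M :: "'a measure"
    and X :: "nat \<Rightarrow> 'a \<Rightarrow> complex" and \<epsilon> :: real
  assumes "prob_space \<mu>" and "sets \<mu> = sets borel"
    and "compact (msupp \<mu>)"
    and "prob_space M"
    and "\<And>i. X i \<in> borel_measurable M"
    and "prob_space.indep_vars M (\<lambda>_. borel) X UNIV"
    and "\<And>i. distr M borel (X i) = \<mu>"
    and "\<epsilon> > 0"
  shows "AE \<omega> in M. eventually
           (\<lambda>n. critical_points (emp_poly (\<lambda>j. X j \<omega>) n) \<subseteq> nbhd_N \<mu> \<epsilon>) sequentially"
proof -
  obtain R where R: "\<And>y. y \<in> msupp \<mu> \<Longrightarrow> cmod y \<le> R"
    using compact_imp_bounded[OF assms(3)] by (auto simp: bounded_iff)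
  define K where "K = {z. \<epsilon> \<le> infdist z (msupp \<mu> \<union> cauchy_zeros \<mu>)} \<inter> cball 0 R"
  have K_far: "\<And>z. z \<in> K \<Longrightarrow> \<epsilon> \<le> infdist z (msupp \<mu> \<union> cauchy_zeros \<mu>)"
    by (simp add: K_def)
  have "compact K"
    unfolding K_def by (intro closed_Int_compact compact_cball closed_Collect_le continuous_on_const
        continuous_on_infdist continuous_on_id)
  then obtain \<delta> where "\<delta> > 0" and \<delta>: "\<And>z. z \<in> K \<Longrightarrow> \<delta> \<le> cmod (cauchy_transform \<mu> z)"
    using cauchy_transform_bounded_below[OF assms(1,2) _ \<open>\<epsilon> > 0\<close> K_far] by blast
  have "AE \<omega> in M. (\<forall>j. X j \<omega> \<in> msupp \<mu>) \<and> eventually (\<lambda>n. \<forall>z\<in>K.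
      cmod ((\<Sum>j\<in>{1..n}. 1 / (z - X j \<omega>)) - of_nat n * cauchy_transform \<mu> z) < real n * \<delta>)
      sequentially"
    by (intro eventually_conj
        prob_space.AE_all_in_if_distr[OF assms(4,5,7) AE_in_msupp[OF assms(2)]]
        prob_space.AE_eventually_uniform_cauchy_sum_deviation_less[OF assms(4,2,6,7) \<open>compact K\<close>
          \<open>\<epsilon> > 0\<close> \<open>\<delta> > 0\<close> K_far])
  then show ?thesis
  proof eventually_elim
    case (elim \<omega>)
    then have "eventually (\<lambda>n. n \<ge> 1 \<and> (\<forall>z\<in>K. cmod ((\<Sum>j\<in>{1..n}. 1 / (z - X j \<omega>))
        - of_nat n * cauchy_transform \<mu> z) < real n * \<delta>)) sequentially"
      by (intro eventually_conj) (simp_all add: eventually_ge_at_top)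
    then show ?case
    proof (rule eventually_mono)
      fix n assume "n \<ge> 1 \<and> (\<forall>z\<in>K. cmod ((\<Sum>j\<in>{1..n}. 1 / (z - X j \<omega>))
        - of_nat n * cauchy_transform \<mu> z) < real n * \<delta>)"
      with elim show "critical_points (emp_poly (\<lambda>j. X j \<omega>) n) \<subseteq> nbhd_N \<mu> \<epsilon>"
        by (intro critical_points_emp_poly_subset_nbhd_N[OF _ R _ \<open>\<epsilon> > 0\<close>
              K_def[THEN equalityD2] _ \<delta>]) auto
    qed
  qed
qed

end
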